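(* For integers $d\ge1$ and $s\ge0$, let $F_s^d$ be the number of lattice paths with unit steps $(1,0)$ and $(0,1)$ from $(0,0)$ to $(s+2,s)$ all of whose points other than the endpoint satisfy $x-2<y<x+d$ (the endpoint lies on $y=x-2$). Then for every $\alpha\in(0,1/2)$, $$\sum_{s=0}^\infty F_s^d\,\big(\alpha(1-\alpha)\big)^s=\frac{1}{\alpha^2}\left(1-\frac{1-2\alpha}{(1-\alpha)^2\Big(1-\big(\tfrac{\alpha}{1-\alpha}\big)^{d+2}\Big)}\right).$$ *)

theory Defs
  imports Complex_Main
begin

text \<open>A lattice path from (0,0) with unit steps is encoded as a list of steps:
  True = step (1,0), False = step (0,1).\<close>

definition lp_point :: "bool list \<Rightarrow> nat \<Rightarrow> int \<times> int" where
  "lp_point p k = (int (length (filter id (take k p))),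
                   int (length (filter Not (take k p))))"

definition F :: "nat \<Rightarrow> nat \<Rightarrow> nat" where
  "F d s = card {p :: bool list. length p = 2 * s + 2
      \<and> lp_point p (length p) = (int s + 2, int s)
      \<and> (\<forall>k < length p. fst (lp_point p k) - 2 < snd (lp_point p k)
                       \<and> snd (lp_point p k) < fst (lp_point p k) + int d)}"

end

theory Submission
  imports Defs
begin

text \<open>Read a path as a walk on the integers: the height is d + x - y, so an East step goes
  up and a North step goes down. The constraint x - 2 < y < x + d says that the walk,
  started at height d, stays strictly between 0 and N = d + 2 until its last step,
  which reaches N. Summing the weights p^(#up) q^(#down) over all such walks gives
  the probability that a gambler with capital d, winning each round with probability
  p = 1 - \<alpha>, reaches capital N before ruin, namely (1 - r^d)/(1 - r^N) with
  r = q/p. This is proved by bounding the partial sums by that function, which is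
  harmonic for the walk, and by showing that the limit is again harmonic with the same
  boundary values, hence equal to it. A path with s + 2 up steps and s down steps
  has weight p^2 (pq)^s, which gives the generating function of F d.\<close>

fun wins :: "nat \<Rightarrow> nat \<Rightarrow> bool list \<Rightarrow> bool" where
  "wins N j [] \<longleftrightarrow> j = N"
| "wins N j (b # l) \<longleftrightarrow> 0 < j \<and> j < N \<and> wins N (if b then Suc j else j - 1) l"

definition disp :: "bool list \<Rightarrow> int" where
  "disp l = int (length (filter id l)) - int (length (filter Not l))"

lemma disp_simps [simp]:
  "disp [] = 0" "disp (True # l) = disp l + 1" "disp (False # l) = disp l - 1"
  by (auto simp: disp_def)

lemma wins_iff:
  "wins N j l \<longleftrightarrow>
     (\<forall>k<length l. 0 < int j + disp (take k l) \<and> int j + disp (take k l) < int N)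
     \<and> int j + disp l = int N"
proof (induction l arbitrary: j)
  case Nil
  then show ?case by simp
next
  case (Cons b l)
  have split_first: "(\<forall>k<length (b # l). P k) \<longleftrightarrow> P 0 \<and> (\<forall>k<length l. P (Suc k))" for P
    by (auto simp: less_Suc_eq_0_disj)
  show ?case
    unfolding split_first using Cons[of "if b then Suc j else j - 1"]
    by (cases b; cases "j = 0") (auto simp: algebra_simps of_nat_diff)
qed

definition winning_paths :: "nat \<Rightarrow> nat \<Rightarrow> nat \<Rightarrow> bool list set" where
  "winning_paths N n j = {l. length l = n \<and> wins N j l}"

lemma finite_winning_paths: "finite (winning_paths N n j)"
  by (rule finite_subset[OF _ finite_lists_length_eq[of UNIV n]]) (auto simp: winning_paths_def)

lemma winning_paths_0: "winning_paths N 0 j = (if j = N then {[]} else {})"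
  by (auto simp: winning_paths_def)

lemma winning_paths_Suc:
  "winning_paths N (Suc n) j =
     (if 0 < j \<and> j < N
      then Cons True ` winning_paths N n (Suc j) \<union> Cons False ` winning_paths N n (j - 1)
      else {})"
  by (auto simp: winning_paths_def length_Suc_conv image_iff split: if_split_asm)

lemma winning_path_counts:
  assumes "l \<in> winning_paths N n j"
  shows "length (filter id l) + length (filter Not l) = n" and "int j + disp l = int N"
  using assms sum_length_filter_compl[of id l]
  by (auto simp: winning_paths_def wins_iff comp_def)

lemma F_eq_card_winning_paths: "F d s = card (winning_paths (d + 2) (2 * s + 2) d)"
proof -
  have "l \<in> winning_paths (d + 2) (2 * s + 2) d \<longleftrightarrow>
        length l = 2 * s + 2 \<and> lp_point l (length l) = (int s + 2, int s)
        \<and> (\<forall>k < length l. fst (lp_point l k) - 2 < snd (lp_point l k)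
                         \<and> snd (lp_point l k) < fst (lp_point l k) + int d)" for l
  proof -
    have disp_lp_point: "disp (take k l) = fst (lp_point l k) - snd (lp_point l k)" for k
      by (simp add: lp_point_def disp_def)
    have strip: "(0 < int d + (a - b) \<and> int d + (a - b) < int (d + 2)) \<longleftrightarrow>
                 (a - 2 < b \<and> b < a + int d)" for a b :: int
      by linarith
    have "lp_point l (length l) = (int s + 2, int s) \<longleftrightarrow> int d + disp l = int (d + 2)"
      if "length l = 2 * s + 2"
      using that sum_length_filter_compl[of id l] by (auto simp: lp_point_def disp_def comp_def)
    then show ?thesis
      unfolding winning_paths_def wins_iff mem_Collect_eq disp_lp_point strip by blast
  qed
  then have "{l. length l = 2 * s + 2 \<and> lp_point l (length l) = (int s + 2, int s)
        \<and> (\<forall>k < length l. fst (lp_point l k) - 2 < snd (lp_point l k)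
                         \<and> snd (lp_point l k) < fst (lp_point l k) + int d)}
        = winning_paths (d + 2) (2 * s + 2) d"
    by blast
  then show ?thesis unfolding F_def by simp
qed

locale gamblers_ruin =
  fixes p q :: real and N :: nat
  assumes q_pos: "0 < q" and q_less_p: "q < p" and p_plus_q: "p + q = 1" and N_pos: "0 < N"
begin

lemma p_pos: "0 < p"
  using q_pos q_less_p by simp

definition win_weight :: "nat \<Rightarrow> nat \<Rightarrow> real" where
  "win_weight n j =
     (\<Sum>l\<in>winning_paths N n j. p ^ length (filter id l) * q ^ length (filter Not l))"

lemma win_weight_0: "win_weight 0 j = (if j = N then 1 else 0)"
  by (simp add: win_weight_def winning_paths_0)

lemma win_weight_Suc:
  "win_weight (Suc n) j =
     (if 0 < j \<and> j < N then p * win_weight n (Suc j) + q * win_weight n (j - 1) else 0)"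
proof -
  have "Cons True ` winning_paths N n (Suc j) \<inter> Cons False ` winning_paths N n (j - 1) = {}"
    by auto
  then show ?thesis
    by (simp add: win_weight_def winning_paths_Suc sum.union_disjoint finite_winning_paths
        sum.reindex sum_distrib_left mult_ac)
qed

lemma win_weight_nonneg: "0 \<le> win_weight n j"
  using p_pos q_pos by (induction n arbitrary: j) (auto simp: win_weight_0 win_weight_Suc)

lemma win_weight_at_0: "win_weight n 0 = 0"
  using N_pos by (cases n) (auto simp: win_weight_0 win_weight_Suc)

lemma win_weight_above_N: "N < j \<Longrightarrow> win_weight n j = 0"
  by (cases n) (auto simp: win_weight_0 win_weight_Suc)

definition win_prob :: "nat \<Rightarrow> real" where
  "win_prob j = (1 - (q / p) ^ j) / (1 - (q / p) ^ N)"

lemma ratio_power_less_one: "0 < n \<Longrightarrow> (q / p) ^ n < 1"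
  using p_pos q_pos q_less_p by (simp add: power_less_one_iff)

lemma win_prob_nonneg: "0 \<le> win_prob j"
  using ratio_power_less_one[OF N_pos] p_pos q_pos q_less_p
  by (simp add: win_prob_def power_le_one)

lemma win_prob_0: "win_prob 0 = 0"
  by (simp add: win_prob_def)

lemma win_prob_N: "win_prob N = 1"
  using ratio_power_less_one[OF N_pos] by (simp add: win_prob_def)

lemma win_prob_harmonic:
  assumes "0 < j"
  shows "p * win_prob (Suc j) + q * win_prob (j - 1) = win_prob j"
proof -
  obtain m where j: "j = Suc m"
    using assms gr0_implies_Suc by blast
  have "p * (q / p) ^ Suc (Suc m) + q * (q / p) ^ m = (q / p) ^ Suc m * (q + p)"
    using p_pos by (simp add: field_simps)
  then have "p * (1 - (q / p) ^ Suc (Suc m)) + q * (1 - (q / p) ^ m) = 1 - (q / p) ^ Suc m"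
    using p_plus_q by (simp add: algebra_simps)
  then show ?thesis
    unfolding win_prob_def j by (metis add_divide_distrib diff_Suc_1 times_divide_eq_right)
qed

lemma win_weight_partial_sum_le:
  "j \<le> N \<Longrightarrow> (\<Sum>n<M. win_weight n j) \<le> win_prob j"
proof (induction M arbitrary: j)
  case 0
  then show ?case using win_prob_nonneg by simp
next
  case (Suc M)
  have shift: "(\<Sum>n<Suc M. win_weight n j) = win_weight 0 j + (\<Sum>n<M. win_weight (Suc n) j)"
    by (rule sum.lessThan_Suc_shift)
  consider "j = 0" | "0 < j \<and> j < N" | "j = N"
    using Suc.prems by linarith
  then show ?case
  proof cases
    case 1
    then show ?thesis by (simp add: win_weight_at_0 win_prob_0)
  next
    case 2
    then have "(\<Sum>n<Suc M. win_weight n j)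
               = p * (\<Sum>n<M. win_weight n (Suc j)) + q * (\<Sum>n<M. win_weight n (j - 1))"
      unfolding shift by (simp add: win_weight_0 win_weight_Suc sum.distrib sum_distrib_left)
    also have "\<dots> \<le> p * win_prob (Suc j) + q * win_prob (j - 1)"
      using Suc.IH[of "Suc j"] Suc.IH[of "j - 1"] 2 p_pos q_pos
      by (intro add_mono mult_left_mono) auto
    also have "\<dots> = win_prob j"
      using 2 by (intro win_prob_harmonic) simp
    finally show ?thesis .
  next
    case 3
    then show ?thesis unfolding shift by (simp add: win_weight_0 win_weight_Suc win_prob_N)
  qed
qed

lemma summable_win_weight: "summable (\<lambda>n. win_weight n j)"
proof (cases "j \<le> N")
  case True
  then show ?thesis
    by (intro summableI_nonneg_bounded[OF win_weight_nonneg win_weight_partial_sum_le])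
next
  case False
  then show ?thesis by (simp add: win_weight_above_N)
qed

text \<open>A harmonic function vanishing at both ends vanishes: its increments form a geometric
  sequence with ratio q/p, and they add up to zero over [0, N].\<close>

lemma harmonic_zero_boundary:
  assumes harmonic: "\<And>j. 0 < j \<Longrightarrow> j < N \<Longrightarrow> E j = p * E (Suc j) + q * E (j - 1)"
    and "E 0 = 0" and "E N = 0" and "j \<le> N"
  shows "E j = 0"
proof -
  have increment: "E (Suc k) - E k = (q / p) ^ k * E 1" if "k < N" for k
    using that
  proof (induction k)
    case (Suc k)
    have "(p + q) * E (Suc k) = p * E (Suc (Suc k)) + q * E k"
      using harmonic[of "Suc k"] Suc.prems p_plus_q by simp
    then have "p * (E (Suc (Suc k)) - E (Suc k)) = q * (E (Suc k) - E k)"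
      by (simp add: algebra_simps)
    then have "E (Suc (Suc k)) - E (Suc k) = q / p * (E (Suc k) - E k)"
      using p_pos by (simp add: field_simps)
    then show ?case using Suc by simp
  qed (simp add: \<open>E 0 = 0\<close>)
  have partial: "E k = E 1 * (\<Sum>i<k. (q / p) ^ i)" if "k \<le> N" for k
    using that
  proof (induction k)
    case (Suc k)
    then show ?case using increment[of k] by (simp add: algebra_simps)
  qed (simp add: \<open>E 0 = 0\<close>)
  have "0 < (\<Sum>i<N. (q / p) ^ i)"
    using N_pos p_pos q_pos by (intro sum_pos) auto
  then have "E 1 = 0"
    using partial[of N] \<open>E N = 0\<close> by simp
  then show ?thesis
    using partial[OF \<open>j \<le> N\<close>] by simp
qed

lemma win_weight_sums:
  assumes "j \<le> N"
  shows "(\<lambda>n. win_weight n j) sums win_prob j"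
proof -
  define L where "L k = (\<Sum>n. win_weight n k)" for k
  have L_sums: "(\<lambda>n. win_weight n k) sums L k" for k
    unfolding L_def by (rule summable_sums[OF summable_win_weight])
  have L_harmonic: "L k = p * L (Suc k) + q * L (k - 1)" if "0 < k" "k < N" for k
  proof -
    have "(\<lambda>n. win_weight (Suc n) k) sums (p * L (Suc k) + q * L (k - 1))"
      using that by (simp add: win_weight_Suc) (intro sums_add sums_mult L_sums)
    then have "(\<lambda>n. win_weight n k) sums (p * L (Suc k) + q * L (k - 1))"
      using sums_Suc_iff[of "\<lambda>n. win_weight n k"] that by (simp add: win_weight_0)
    then show ?thesis
      using L_sums sums_unique2 by blast
  qed
  have "L 0 = 0"
    unfolding L_def by (simp add: win_weight_at_0)
  have "(\<lambda>n. win_weight (Suc n) N) sums 0"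
    by (simp add: win_weight_Suc)
  then have "(\<lambda>n. win_weight n N) sums 1"
    using sums_Suc_iff[of "\<lambda>n. win_weight n N"] by (simp add: win_weight_0)
  then have "L N = 1"
    using L_sums sums_unique2 by blast
  have "L k - win_prob k = 0" if "k \<le> N" for k
  proof (rule harmonic_zero_boundary[OF _ _ _ that])
    fix i assume "0 < i" "i < N"
    then show "L i - win_prob i =
        p * (L (Suc i) - win_prob (Suc i)) + q * (L (i - 1) - win_prob (i - 1))"
      using L_harmonic[of i] win_prob_harmonic[of i] by (simp add: algebra_simps)
  qed (simp_all add: \<open>L 0 = 0\<close> \<open>L N = 1\<close> win_prob_0 win_prob_N)
  then show ?thesis
    using L_sums[of j] assms by simp
qed

lemma win_weight_two_below_eq_0:
  assumes "j + 2 = N" and "n \<notin> range (\<lambda>s. 2 * s + 2)"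
  shows "win_weight n j = 0"
proof -
  have "winning_paths N n j = {}"
  proof (rule ccontr)
    assume "winning_paths N n j \<noteq> {}"
    then obtain l where "l \<in> winning_paths N n j" by blast
    from winning_path_counts[OF this] have "n = 2 * length (filter Not l) + 2"
      using assms(1) unfolding disp_def by linarith
    with assms(2) show False by blast
  qed
  then show ?thesis by (simp add: win_weight_def)
qed

lemma win_weight_two_below_double:
  assumes "j + 2 = N"
  shows "win_weight (2 * s + 2) j = card (winning_paths N (2 * s + 2) j) * p ^ (s + 2) * q ^ s"
proof -
  have "p ^ length (filter id l) * q ^ length (filter Not l) = p ^ (s + 2) * q ^ s"
    if "l \<in> winning_paths N (2 * s + 2) j" for l
  proof -
    from winning_path_counts[OF that] have
      "length (filter id l) = s + 2" "length (filter Not l) = s"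
      using assms unfolding disp_def by linarith+
    then show ?thesis by simp
  qed
  then show ?thesis by (simp add: win_weight_def)
qed

end

lemma F_generating_function:
  assumes "0 < q" and "q < p" and "p + q = 1"
  shows "(\<lambda>s. real (F d s) * (p * q) ^ s) sums
           ((1 - (q / p) ^ d) / (1 - (q / p) ^ (d + 2)) / p\<^sup>2)"
proof -
  interpret gamblers_ruin p q "d + 2"
    using assms by unfold_locales simp_all
  have "(\<lambda>n. win_weight n d) sums win_prob d"
    by (rule win_weight_sums) simp
  moreover have "strict_mono (\<lambda>s::nat. 2 * s + 2)"
    by (rule strict_monoI) simp
  ultimately have "(\<lambda>s. win_weight (2 * s + 2) d) sums win_prob d"
    using sums_mono_reindex[of "\<lambda>s. 2 * s + 2" "\<lambda>n. win_weight n d"] win_weight_two_below_eq_0[of d]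
    by simp
  then have "(\<lambda>s. win_weight (2 * s + 2) d / p\<^sup>2) sums (win_prob d / p\<^sup>2)"
    by (rule sums_divide)
  moreover have "win_weight (2 * s + 2) d / p\<^sup>2 = real (F d s) * (p * q) ^ s" for s
  proof -
    have "p ^ (s + 2) * q ^ s / p\<^sup>2 = (p * q) ^ s"
      using p_pos by (simp add: power_add power_mult_distrib power2_eq_square)
    then show ?thesis
      unfolding win_weight_two_below_double[OF refl] F_eq_card_winning_paths
      by (metis mult.assoc times_divide_eq_right)
  qed
  ultimately show ?thesis
    unfolding win_prob_def by simp
qed

lemma gamblers_ruin_closed_form:
  fixes \<alpha> :: real and d :: nat
  assumes "0 < \<alpha>" and "\<alpha> < 1 / 2"
  defines "r \<equiv> \<alpha> / (1 - \<alpha>)"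
  shows "(1 - r ^ d) / (1 - r ^ (d + 2)) / (1 - \<alpha>)\<^sup>2 =
      (1 / \<alpha>\<^sup>2) * (1 - (1 - 2 * \<alpha>) / ((1 - \<alpha>)\<^sup>2 * (1 - r ^ (d + 2))))"
proof -
  have "0 \<le> r" "r < 1" using assms by (simp_all add: r_def)
  define D where "D = (1 - \<alpha>)\<^sup>2 * (1 - r ^ (d + 2))"
  have "D \<noteq> 0"
    using \<open>r < 1\<close> \<open>0 \<le> r\<close> power_less_one_iff[of r "d + 2"] assms(2) by (simp add: D_def)
  have "(1 - \<alpha>)\<^sup>2 * r\<^sup>2 = \<alpha>\<^sup>2"
    using assms(2) by (simp add: r_def power_divide)
  then have "(1 - \<alpha>)\<^sup>2 * r ^ (d + 2) = \<alpha>\<^sup>2 * r ^ d"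
    by (metis mult.assoc mult.commute power_add)
  then have "D = (1 - \<alpha>)\<^sup>2 - \<alpha>\<^sup>2 * r ^ d"
    by (simp add: D_def right_diff_distrib)
  then have "D - (1 - 2 * \<alpha>) = \<alpha>\<^sup>2 * (1 - r ^ d)"
    by (simp add: power2_eq_square algebra_simps)
  moreover have "1 - (1 - 2 * \<alpha>) / D = (D - (1 - 2 * \<alpha>)) / D"
    using \<open>D \<noteq> 0\<close> by (simp add: diff_divide_distrib)
  ultimately show ?thesis
    using \<open>0 < \<alpha>\<close> by (simp add: D_def)
qed

theorem lemma4:
  fixes d :: nat and \<alpha> :: real
  assumes "d \<ge> 1" and "0 < \<alpha>" and "\<alpha> < 1/2"
  shows "(\<lambda>s. real (F d s) * (\<alpha> * (1 - \<alpha>)) ^ s) sums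
           ((1 / \<alpha>\<^sup>2) * (1 - (1 - 2 * \<alpha>) /
              ((1 - \<alpha>)\<^sup>2 * (1 - (\<alpha> / (1 - \<alpha>)) ^ (d + 2)))))"
proof -
  have "(\<lambda>s. real (F d s) * ((1 - \<alpha>) * \<alpha>) ^ s) sums
          ((1 - (\<alpha> / (1 - \<alpha>)) ^ d) / (1 - (\<alpha> / (1 - \<alpha>)) ^ (d + 2)) / (1 - \<alpha>)\<^sup>2)"
    using assms by (intro F_generating_function) auto
  then show ?thesis
    using gamblers_ruin_closed_form[OF \<open>0 < \<alpha>\<close> \<open>\<alpha> < 1/2\<close>] by (simp add: mult.commute)
qed

end
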